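(* Let $w$, $w_{\pm\frac12}$, the inner product on the parabola $\Omega=\{(x,x^2):x\in\mathbb R\}$, and the basis $Y_{n,1}(x,y)=p_n(w_{-\frac12};y)$, $Y_{n,2}(x,y)=x\,p_{n-1}(w_{\frac12};y)$ be as in the context. Let $f\in L^2(\varpi,\Omega)$ and define for $y>0$ $$f_e(y)=\frac{f(\sqrt y,y)+f(-\sqrt y,y)}{2},\qquad f_o(y)=\frac{f(\sqrt y,y)-f(-\sqrt y,y)}{2\sqrt y}.$$ Then for all $(x,y)\in\Omega$ and $n\ge1$, $$S_nf(x,y)=s_n(w_{-\frac12};f_e,y)+x\,s_{n-1}(w_{\frac12};f_o,y).$$ In particular, if $s_n(w_{-\frac12};f_e,y)\to f_e(y)$ and $s_{n-1}(w_{\frac12};f_o,y)\to f_o(y)$ at $y=x^2>0$, then $S_nf(x,y)\to f(x,y)$. Furthermore $$\|f-S_nf\|^2_{L^2(\varpi,\Omega)}=\|s_n(w_{-\frac12};f_e)-f_e\|^2_{L^2(w_{-\frac12})}+\|s_{n-1}(w_{\frac12};f_o)-f_o\|^2_{L^2(w_{\frac12})}.$$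
   Context: $w$ is a nonnegative weight on $[0,\infty)$, $w_{-\frac12}(t)=t^{-\frac12}w(t)$, $w_{\frac12}(t)=t^{\frac12}w(t)$. The inner product is $\langle f,g\rangle=\int_{\mathbb R}f(x,x^2)g(x,x^2)w(x^2)\,dx$, with $\|f\|^2_{L^2(\varpi,\Omega)}=\langle f,f\rangle$. For a weight $v$: $p_n(v;\cdot)$ is an orthogonal polynomial of degree $n$ for $v$, $h_n(v)=\int p_n(v)^2v$, $\widehat g_k(v)=h_k(v)^{-1}\int g\,p_k(v)\,v$, $s_n(v;g,x)=\sum_{k=0}^n\widehat g_k(v)p_k(v;x)$, and $L^2(v)$ is the weighted $L^2$ space. For $f\in L^2(\varpi,\Omega)$, $S_nf=\widehat f_0+\sum_{k=1}^n[\widehat f_{k,1}Y_{k,1}+\widehat f_{k,2}Y_{k,2}]$ with $\widehat f_0=\langle f,1\rangle/\langle 1,1\rangle$, $\widehat f_{k,i}=\langle f,Y_{k,i}\rangle/\langle Y_{k,i},Y_{k,i}\rangle$. *)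

theory Defs
  imports "HOL-Analysis.Analysis" "HOL-Computational_Algebra.Polynomial"
begin

definition wminus :: "(real \<Rightarrow> real) \<Rightarrow> real \<Rightarrow> real" where
  "wminus w t = t powr (-1/2) * w t"

definition wplus :: "(real \<Rightarrow> real) \<Rightarrow> real \<Rightarrow> real" where
  "wplus w t = t powr (1/2) * w t"

definition wint :: "(real \<Rightarrow> real) \<Rightarrow> (real \<Rightarrow> real) \<Rightarrow> real" where
  "wint v g = (LINT t:{0..}|lborel. g t * v t)"

definition hnorm :: "(real \<Rightarrow> real) \<Rightarrow> (nat \<Rightarrow> real poly) \<Rightarrow> nat \<Rightarrow> real" where
  "hnorm v p n = wint v (\<lambda>t. (poly (p n) t)^2)"

definition is_OPS :: "(real \<Rightarrow> real) \<Rightarrow> (nat \<Rightarrow> real poly) \<Rightarrow> bool" where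
  "is_OPS v p \<longleftrightarrow>
     (\<forall>n. degree (p n) = n) \<and>
     (\<forall>n q. degree q < n \<longrightarrow> wint v (\<lambda>t. poly q t * poly (p n) t) = 0) \<and>
     (\<forall>n. hnorm v p n > 0)"

definition fcoef :: "(real \<Rightarrow> real) \<Rightarrow> (nat \<Rightarrow> real poly) \<Rightarrow> (real \<Rightarrow> real) \<Rightarrow> nat \<Rightarrow> real" where
  "fcoef v p g k = wint v (\<lambda>t. g t * poly (p k) t) / hnorm v p k"

definition spart :: "(real \<Rightarrow> real) \<Rightarrow> (nat \<Rightarrow> real poly) \<Rightarrow> (real \<Rightarrow> real) \<Rightarrow> nat \<Rightarrow> real \<Rightarrow> real" where
  "spart v p g n x = (\<Sum>k\<le>n. fcoef v p g k * poly (p k) x)"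

definition L2sq :: "(real \<Rightarrow> real) \<Rightarrow> (real \<Rightarrow> real) \<Rightarrow> real" where
  "L2sq v g = wint v (\<lambda>t. (g t)^2)"

text \<open>Functions on the parabola are represented as functions of (x,y); only values at y = x^2 matter.\<close>
definition ipOmega :: "(real \<Rightarrow> real) \<Rightarrow> (real \<Rightarrow> real \<Rightarrow> real) \<Rightarrow> (real \<Rightarrow> real \<Rightarrow> real) \<Rightarrow> real" where
  "ipOmega w f g = (LINT x|lborel. f x (x^2) * g x (x^2) * w (x^2))"

definition in_L2Omega :: "(real \<Rightarrow> real) \<Rightarrow> (real \<Rightarrow> real \<Rightarrow> real) \<Rightarrow> bool" where
  "in_L2Omega w f \<longleftrightarrow> (\<lambda>x. f x (x^2)) \<in> borel_measurable lborel \<and>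
     integrable lborel (\<lambda>x. (f x (x^2))^2 * w (x^2))"

definition Y1 :: "(nat \<Rightarrow> real poly) \<Rightarrow> nat \<Rightarrow> real \<Rightarrow> real \<Rightarrow> real" where
  "Y1 p n x y = poly (p n) y"

definition Y2 :: "(nat \<Rightarrow> real poly) \<Rightarrow> nat \<Rightarrow> real \<Rightarrow> real \<Rightarrow> real" where
  "Y2 q n x y = x * poly (q (n - 1)) y"

definition ocoef :: "(real \<Rightarrow> real) \<Rightarrow> (real \<Rightarrow> real \<Rightarrow> real) \<Rightarrow> (real \<Rightarrow> real \<Rightarrow> real) \<Rightarrow> real" where
  "ocoef w f Y = ipOmega w f Y / ipOmega w Y Y"

text \<open>S_n f, with Y_{n,1} built from p (orthogonal for w_{-1/2}) and Y_{n,2} from q (orthogonal for w_{1/2}).\<close>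
definition Sn :: "(real \<Rightarrow> real) \<Rightarrow> (nat \<Rightarrow> real poly) \<Rightarrow> (nat \<Rightarrow> real poly) \<Rightarrow>
    (real \<Rightarrow> real \<Rightarrow> real) \<Rightarrow> nat \<Rightarrow> real \<Rightarrow> real \<Rightarrow> real" where
  "Sn w p q f n x y = ocoef w f (\<lambda>_ _. 1)
     + (\<Sum>k=1..n. ocoef w f (Y1 p k) * Y1 p k x y + ocoef w f (Y2 q k) * Y2 q k x y)"

definition feven :: "(real \<Rightarrow> real \<Rightarrow> real) \<Rightarrow> real \<Rightarrow> real" where
  "feven f y = (f (sqrt y) y + f (- sqrt y) y) / 2"

definition fodd :: "(real \<Rightarrow> real \<Rightarrow> real) \<Rightarrow> real \<Rightarrow> real" where
  "fodd f y = (f (sqrt y) y - f (- sqrt y) y) / (2 * sqrt y)"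

end

theory Submission
  imports Defs
begin

text \<open>Substituting \<open>x = \<plusminus>sqrt y\<close> folds an integral over the real line onto \<open>[0,\<infinity>)\<close>:
  \<open>\<integral> G = \<integral>\<^sub>0\<^sup>\<infinity> (G(sqrt y) + G(-sqrt y)) / (2 sqrt y) dy\<close>. A function on the parabola splits as
  f(x,x^2) = f_e(x^2) + x f_o(x^2), and folding the inner product gives
  <f,g> = \<integral> f_e g_e w_{-1/2} + \<integral> f_o g_o w_{1/2}. As Y_{n,1} is even and Y_{n,2} odd in x, the
  Fourier coefficients of f are those of f_e for w_{-1/2} and of f_o for w_{1/2}, which gives the
  formula for S_n f; the same identity applied to f - S_n f gives the error formula.\<close>

definition sqrt_fold :: "(real \<Rightarrow> real) \<Rightarrow> real \<Rightarrow> real" where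
  "sqrt_fold G y = (G (sqrt y) + G (- sqrt y)) / (2 * sqrt y)"

lemma sqrt_fold_measurable[measurable]:
  assumes [measurable]: "G \<in> borel_measurable borel"
  shows "sqrt_fold G \<in> borel_measurable borel"
  unfolding sqrt_fold_def by measurable

lemma nn_integral_atLeast0_SUP:
  fixes \<phi> :: "real \<Rightarrow> ennreal" and a :: "nat \<Rightarrow> real"
  assumes [measurable]: "\<phi> \<in> borel_measurable borel"
    and "incseq a" and unbounded: "\<And>y. \<exists>n. y \<le> a n"
  shows "(\<integral>\<^sup>+x. \<phi> x * indicator {0..} x \<partial>lborel) = (SUP n. \<integral>\<^sup>+x. \<phi> x * indicator {0..a n} x \<partial>lborel)"
proof -
  have "\<phi> x * indicator {0..} x = (SUP n. \<phi> x * indicator {0..a n} x)" for x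
  proof (rule antisym)
    show "\<phi> x * indicator {0..} x \<le> (SUP n. \<phi> x * indicator {0..a n} x)"
    proof (cases "x \<ge> 0")
      case True
      obtain n where "x \<le> a n" using unbounded by blast
      with True show ?thesis by (intro SUP_upper2[of n]) (auto split: split_indicator)
    qed auto
  qed (auto intro!: SUP_least split: split_indicator)
  then have "(\<integral>\<^sup>+x. \<phi> x * indicator {0..} x \<partial>lborel) = (\<integral>\<^sup>+x. (SUP n. \<phi> x * indicator {0..a n} x) \<partial>lborel)"
    by simp
  also have "\<dots> = (SUP n. \<integral>\<^sup>+x. \<phi> x * indicator {0..a n} x \<partial>lborel)"
  proof (rule nn_integral_monotone_convergence_SUP)
    show "incseq (\<lambda>n x. \<phi> x * indicator {0..a n} x)"
      using \<open>incseq a\<close> by (auto simp: incseq_def le_fun_def split: split_indicator) (meson order_trans)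
  qed simp
  finally show ?thesis .
qed

lemma nn_integral_atLeast0_square_substitution:
  fixes H :: "real \<Rightarrow> real"
  assumes [measurable]: "H \<in> borel_measurable borel"
  shows "(\<integral>\<^sup>+y. ennreal (H y * indicator {0..} y) \<partial>lborel) =
         (\<integral>\<^sup>+x. ennreal (H (x^2) * (2*x) * indicator {0..} x) \<partial>lborel)"
proof -
  have ind: "ennreal (c * indicator S x) = ennreal c * indicator S x" for c S and x :: real
    by (simp split: split_indicator)
  have bounded: "(\<integral>\<^sup>+y. ennreal (H y) * indicator {0..(real n)^2} y \<partial>lborel) =
         (\<integral>\<^sup>+x. ennreal (H (x^2) * (2*x)) * indicator {0..real n} x \<partial>lborel)" for n
  proof -
    have "((\<lambda>x. x^2) has_real_derivative 2*x) (at x)" for x :: real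
      by (auto intro!: derivative_eq_intros)
    then show ?thesis
      using nn_integral_substitution[where f = H and g = "\<lambda>x. x^2" and g' = "\<lambda>x. 2*x" and a = 0 and b = "real n"]
      by (simp add: ind set_borel_measurable_def continuous_intros)
  qed
  have "incseq (\<lambda>n. (real n)^2)" by (auto simp: incseq_def intro: power_mono)
  moreover have "\<exists>n. y \<le> (real n)^2" for y
  proof -
    obtain n where "y \<le> real n"
      using real_arch_simple by blast
    also have "real n \<le> (real n)^2"
      using le_square[of n] by (simp add: power2_eq_square flip: of_nat_mult)
    finally show ?thesis ..
  qed
  ultimately have "(\<integral>\<^sup>+y. ennreal (H y) * indicator {0..} y \<partial>lborel) =
      (SUP n. \<integral>\<^sup>+x. ennreal (H (x^2) * (2*x)) * indicator {0..real n} x \<partial>lborel)"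
    unfolding bounded[symmetric] by (intro nn_integral_atLeast0_SUP) auto
  also have "\<dots> = (\<integral>\<^sup>+x. ennreal (H (x^2) * (2*x)) * indicator {0..} x \<partial>lborel)"
    by (rule nn_integral_atLeast0_SUP[symmetric]) (auto simp: incseq_def real_arch_simple)
  finally show ?thesis by (simp add: ind)
qed

lemma nn_integral_sqrt_fold:
  fixes G :: "real \<Rightarrow> real"
  assumes [measurable]: "G \<in> borel_measurable borel" and nonneg: "\<And>x. G x \<ge> 0"
  shows "(\<integral>\<^sup>+x. ennreal (G x) \<partial>lborel) = (\<integral>\<^sup>+y. ennreal (sqrt_fold G y * indicator {0..} y) \<partial>lborel)"
proof -
  have "(\<integral>\<^sup>+x. ennreal (G x * indicator {..<0} x) \<partial>lborel)
      = (\<integral>\<^sup>+x. ennreal (G (- x) * indicator {..<0} (- x)) \<partial>lborel)"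
    using nn_integral_real_affine[of "\<lambda>x. ennreal (G x * indicator {..<0} x)" "-1" 0] by simp
  also have "\<dots> = (\<integral>\<^sup>+x. ennreal (G (- x) * indicator {0..} x) \<partial>lborel)"
    by (rule nn_integral_cong_AE, use AE_lborel_singleton[of 0] in eventually_elim)
       (auto split: split_indicator)
  finally have reflect: "(\<integral>\<^sup>+x. ennreal (G x * indicator {..<0} x) \<partial>lborel)
      = (\<integral>\<^sup>+x. ennreal (G (- x) * indicator {0..} x) \<partial>lborel)" .
  have "(\<integral>\<^sup>+x. ennreal (G x) \<partial>lborel) =
     (\<integral>\<^sup>+x. ennreal (G x * indicator {0..} x) + ennreal (G x * indicator {..<0} x) \<partial>lborel)"
    by (rule nn_integral_cong) (auto split: split_indicator)
  also have "\<dots> = (\<integral>\<^sup>+x. ennreal (G x * indicator {0..} x) + ennreal (G (- x) * indicator {0..} x) \<partial>lborel)"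
    by (simp add: nn_integral_add reflect)
  also have "\<dots> = (\<integral>\<^sup>+x. ennreal (sqrt_fold G (x^2) * (2*x) * indicator {0..} x) \<partial>lborel)"
  proof (rule nn_integral_cong_AE, use AE_lborel_singleton[of 0] in eventually_elim)
    fix x :: real
    assume "x \<noteq> 0"
    then show "ennreal (G x * indicator {0..} x) + ennreal (G (- x) * indicator {0..} x) =
          ennreal (sqrt_fold G (x^2) * (2 * x) * indicator {0..} x)"
      using nonneg[of x] nonneg[of "- x"]
      by (cases "x > 0") (auto simp: sqrt_fold_def ennreal_plus[symmetric] simp del: ennreal_plus split: split_indicator)
  qed
  also have "\<dots> = (\<integral>\<^sup>+y. ennreal (sqrt_fold G y * indicator {0..} y) \<partial>lborel)"
    by (rule nn_integral_atLeast0_square_substitution[symmetric]) measurable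
  finally show ?thesis .
qed

lemma integrable_sqrt_fold_nonneg:
  fixes G :: "real \<Rightarrow> real"
  assumes [measurable]: "G \<in> borel_measurable borel" and nonneg: "\<And>x. G x \<ge> 0"
  shows "integrable lborel G \<longleftrightarrow> set_integrable lborel {0..} (sqrt_fold G)"
    and "(LINT x|lborel. G x) = (LINT y:{0..}|lborel. sqrt_fold G y)"
proof -
  have fold_nonneg: "sqrt_fold G y * indicator {0..} y \<ge> 0" for y
    using nonneg[of "sqrt y"] nonneg[of "- sqrt y"] by (auto simp: sqrt_fold_def split: split_indicator)
  have set_fold: "(\<lambda>y. indicator {0..} y *\<^sub>R sqrt_fold G y) = (\<lambda>y. sqrt_fold G y * indicator {0..} y)"
    by auto
  show "integrable lborel G \<longleftrightarrow> set_integrable lborel {0..} (sqrt_fold G)"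
    unfolding set_integrable_def set_fold integrable_iff_bounded
    using nonneg fold_nonneg by (simp add: nn_integral_sqrt_fold)
  show "(LINT x|lborel. G x) = (LINT y:{0..}|lborel. sqrt_fold G y)"
    unfolding set_lebesgue_integral_def set_fold
    using nonneg fold_nonneg by (simp add: integral_eq_nn_integral nn_integral_sqrt_fold)
qed

lemma integral_sqrt_fold:
  fixes G :: "real \<Rightarrow> real"
  assumes [measurable]: "G \<in> borel_measurable borel" and "integrable lborel G"
  shows "set_integrable lborel {0..} (sqrt_fold G)"
    and "(LINT x|lborel. G x) = (LINT y:{0..}|lborel. sqrt_fold G y)"
proof -
  define Gp where "Gp x = max (G x) 0" for x
  define Gm where "Gm x = max (- G x) 0" for x
  have [measurable]: "Gp \<in> borel_measurable borel" "Gm \<in> borel_measurable borel"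
    unfolding Gp_def Gm_def by measurable
  have "integrable lborel Gp" "integrable lborel Gm"
    unfolding Gp_def Gm_def using \<open>integrable lborel G\<close> by auto
  then have parts: "set_integrable lborel {0..} (sqrt_fold Gp)" "set_integrable lborel {0..} (sqrt_fold Gm)"
    using integrable_sqrt_fold_nonneg(1)[of Gp] integrable_sqrt_fold_nonneg(1)[of Gm]
    by (auto simp: Gp_def Gm_def)
  have G_split: "G = (\<lambda>x. Gp x - Gm x)"
    by (auto simp: Gp_def Gm_def fun_eq_iff)
  have fold_split: "sqrt_fold G = (\<lambda>y. sqrt_fold Gp y - sqrt_fold Gm y)"
    unfolding G_split sqrt_fold_def by (auto simp: diff_divide_distrib[symmetric] algebra_simps)
  show "set_integrable lborel {0..} (sqrt_fold G)"
    unfolding fold_split using parts by (rule set_integral_diff)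
  have "(LINT x|lborel. G x) = (LINT x|lborel. Gp x) - (LINT x|lborel. Gm x)"
    by (subst G_split) (rule Bochner_Integration.integral_diff; fact)
  also have "\<dots> = (LINT y:{0..}|lborel. sqrt_fold Gp y - sqrt_fold Gm y)"
    using integrable_sqrt_fold_nonneg(2)[of Gp] integrable_sqrt_fold_nonneg(2)[of Gm]
    by (simp add: set_integral_diff(2)[OF parts] Gp_def Gm_def)
  finally show "(LINT x|lborel. G x) = (LINT y:{0..}|lborel. sqrt_fold G y)"
    unfolding fold_split .
qed

lemma wminus_sqrt: "y \<ge> 0 \<Longrightarrow> wminus w y = w y / sqrt y"
  by (cases "y = 0") (auto simp: wminus_def powr_minus_divide powr_half_sqrt)

lemma wplus_sqrt: "y \<ge> 0 \<Longrightarrow> wplus w y = sqrt y * w y"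
  by (simp add: wplus_def powr_half_sqrt)

text \<open>This also holds at \<open>y = 0\<close>, where both sides vanish: \<open>sqrt_fold\<close> divides by zero and
  \<open>0 powr a = 0\<close> kills the weights.\<close>

lemma sqrt_fold_parabola_product:
  assumes "y \<ge> 0"
  shows "sqrt_fold (\<lambda>x. h x (x^2) * k x (x^2) * w (x^2)) y
    = feven h y * feven k y * wminus w y + fodd h y * fodd k y * wplus w y"
proof (cases "y = 0")
  case True
  then show ?thesis by (simp add: sqrt_fold_def wminus_def wplus_def)
next
  case False
  with assms have "sqrt y > 0" by simp
  then show ?thesis using assms
    by (simp add: sqrt_fold_def feven_def fodd_def wminus_sqrt wplus_sqrt field_simps)
qed

lemma feven_fodd_recombine: "x \<noteq> 0 \<Longrightarrow> feven f (x^2) + x * fodd f (x^2) = f x (x^2)"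
  by (cases "x > 0") (auto simp: feven_def fodd_def field_simps)

lemma spart_poly: "spart v p g n y = poly (\<Sum>k\<le>n. smult (fcoef v p g k) (p k)) y"
  by (simp add: spart_def poly_sum)

lemma wint_cong:
  assumes "\<And>t. t \<ge> 0 \<Longrightarrow> g t * v t = g' t * v t"
  shows "wint v g = wint v g'"
  unfolding wint_def using assms by (intro set_lebesgue_integral_cong) auto

lemma in_L2Omega_measurable: "in_L2Omega w h \<Longrightarrow> (\<lambda>x. h x (x^2)) \<in> borel_measurable borel"
  by (simp add: in_L2Omega_def)

lemma borel_measurable_poly[measurable]: "(\<lambda>x::real. poly R x) \<in> borel_measurable borel"
  by (intro borel_measurable_continuous_onI continuous_intros)

lemma ipOmega_scale_right: "ipOmega w h (\<lambda>x y. c * g x y) = c * ipOmega w h g"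
  unfolding ipOmega_def by (simp add: mult_ac)

lemma ocoef_scale: "c \<noteq> 0 \<Longrightarrow> ocoef w h (\<lambda>x y. c * g x y) = ocoef w h g / c"
  unfolding ocoef_def ipOmega_scale_right
  by (simp add: ipOmega_def mult_ac)

locale parabola_weight =
  fixes w :: "real \<Rightarrow> real"
  assumes w_measurable[measurable]: "w \<in> borel_measurable borel"
    and w_nonneg: "\<And>t. t \<ge> 0 \<Longrightarrow> w t \<ge> 0"
begin

lemma integrable_parabola_product:
  assumes "in_L2Omega w h" "in_L2Omega w k"
  shows "integrable lborel (\<lambda>x. h x (x^2) * k x (x^2) * w (x^2))"
proof (rule Bochner_Integration.integrable_bound)
  show "integrable lborel (\<lambda>x. (h x (x^2))^2 * w (x^2) + (k x (x^2))^2 * w (x^2))"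
    using assms by (simp add: in_L2Omega_def)
  have [measurable]: "(\<lambda>x. h x (x^2)) \<in> borel_measurable borel" "(\<lambda>x. k x (x^2)) \<in> borel_measurable borel"
    using assms by (auto intro: in_L2Omega_measurable)
  show "(\<lambda>x. h x (x^2) * k x (x^2) * w (x^2)) \<in> borel_measurable lborel"
    by measurable
  have "\<bar>a * b\<bar> \<le> a^2 + b^2" for a b :: real
    by sos
  then have "\<bar>h x (x^2) * k x (x^2)\<bar> * w (x^2) \<le> ((h x (x^2))^2 + (k x (x^2))^2) * w (x^2)" for x
    by (simp add: mult_right_mono w_nonneg)
  then show "AE x in lborel. norm (h x (x^2) * k x (x^2) * w (x^2))
      \<le> norm ((h x (x^2))^2 * w (x^2) + (k x (x^2))^2 * w (x^2))"
    by (intro AE_I2) (simp add: abs_mult w_nonneg distrib_right)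
qed

lemma in_L2Omega_lincomb:
  assumes "in_L2Omega w h" "in_L2Omega w k"
  shows "in_L2Omega w (\<lambda>x y. a * h x y + b * k x y)"
proof -
  have [measurable]: "(\<lambda>x. h x (x^2)) \<in> borel_measurable borel" "(\<lambda>x. k x (x^2)) \<in> borel_measurable borel"
    using assms by (auto intro: in_L2Omega_measurable)
  have "integrable lborel (\<lambda>x. (a * h x (x^2) + b * k x (x^2))^2 * w (x^2))"
  proof (rule Bochner_Integration.integrable_bound)
    show "integrable lborel (\<lambda>x. 2 * a^2 * ((h x (x^2))^2 * w (x^2)) + 2 * b^2 * ((k x (x^2))^2 * w (x^2)))"
      using assms by (simp add: in_L2Omega_def)
    have "(a * u + b * v)^2 * c \<le> 2 * a^2 * (u^2 * c) + 2 * b^2 * (v^2 * c)" if "c \<ge> 0" for u v c :: real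
    proof -
      have "(a * u + b * v)^2 \<le> 2 * (a * u)^2 + 2 * (b * v)^2"
        by sos
      from mult_right_mono[OF this that] show ?thesis
        by (simp add: power_mult_distrib algebra_simps)
    qed
    then show "AE x in lborel. norm ((a * h x (x^2) + b * k x (x^2))^2 * w (x^2))
        \<le> norm (2 * a^2 * ((h x (x^2))^2 * w (x^2)) + 2 * b^2 * ((k x (x^2))^2 * w (x^2)))"
      by (intro AE_I2) (simp add: w_nonneg)
  qed measurable
  then show ?thesis
    by (simp add: in_L2Omega_def)
qed

lemma in_L2Omega_reflect:
  assumes "in_L2Omega w h"
  shows "in_L2Omega w (\<lambda>x y. h (- x) y)"
proof -
  have [measurable]: "(\<lambda>x. h x (x^2)) \<in> borel_measurable borel"
    using assms by (rule in_L2Omega_measurable)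
  have "integrable lborel (\<lambda>x. (h x (x^2))^2 * w (x^2))"
    using assms by (simp add: in_L2Omega_def)
  from lborel_integrable_real_affine[OF this, of "-1" 0]
  have "integrable lborel (\<lambda>x. (h (- x) (x^2))^2 * w (x^2))"
    by simp
  moreover have "(\<lambda>x. (\<lambda>z. h z (z^2)) (- x)) \<in> borel_measurable borel"
    by measurable
  ultimately show ?thesis
    by (simp add: in_L2Omega_def)
qed

lemma ipOmega_parity:
  assumes "in_L2Omega w h" "in_L2Omega w k"
  defines "F \<equiv> \<lambda>y. feven h y * feven k y * wminus w y + fodd h y * fodd k y * wplus w y"
  shows "set_integrable lborel {0..} F" and "ipOmega w h k = (LINT y:{0..}|lborel. F y)"
proof -
  have [measurable]: "(\<lambda>x. h x (x^2)) \<in> borel_measurable borel" "(\<lambda>x. k x (x^2)) \<in> borel_measurable borel"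
    using assms by (auto intro: in_L2Omega_measurable)
  let ?G = "\<lambda>x. h x (x^2) * k x (x^2) * w (x^2)"
  have fold: "sqrt_fold ?G y = F y" if "y \<ge> 0" for y
    unfolding F_def using that by (rule sqrt_fold_parabola_product)
  have G: "?G \<in> borel_measurable borel" "integrable lborel ?G"
    using assms by (auto intro: integrable_parabola_product)
  show "set_integrable lborel {0..} F"
    using integral_sqrt_fold(1)[OF G] fold by (subst set_integrable_cong) auto
  show "ipOmega w h k = (LINT y:{0..}|lborel. F y)"
    unfolding ipOmega_def integral_sqrt_fold(2)[OF G] using fold
    by (intro set_lebesgue_integral_cong) auto
qed

lemma L2sq_parity:
  assumes h: "in_L2Omega w h"
  shows "ipOmega w h h = L2sq (wminus w) (feven h) + L2sq (wplus w) (fodd h)"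
proof -
  txt \<open>The even and odd parts of \<open>h\<close> each isolate one summand, which therefore is integrable
    on its own.\<close>
  define he where "he = (\<lambda>x y. 1/2 * h x y + 1/2 * h (- x) y)"
  define ho where "ho = (\<lambda>x y. 1/2 * h x y + - 1/2 * h (- x) y)"
  have L2: "in_L2Omega w he" "in_L2Omega w ho"
    unfolding he_def ho_def by (rule in_L2Omega_lincomb[OF h in_L2Omega_reflect[OF h]])+
  have parts: "feven he = feven h" "fodd he = (\<lambda>_. 0)" "feven ho = (\<lambda>_. 0)" "fodd ho = fodd h"
    by (auto simp: fun_eq_iff he_def ho_def feven_def fodd_def divide_simps)
  have even: "set_integrable lborel {0..} (\<lambda>y. (feven h y)^2 * wminus w y)"
    using ipOmega_parity(1)[OF L2(1) L2(1)] by (simp add: parts power2_eq_square)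
  have odd: "set_integrable lborel {0..} (\<lambda>y. (fodd h y)^2 * wplus w y)"
    using ipOmega_parity(1)[OF L2(2) L2(2)] by (simp add: parts power2_eq_square)
  show ?thesis
    unfolding ipOmega_parity(2)[OF h h] L2sq_def wint_def set_integral_add(2)[OF even odd, symmetric]
    by (simp add: power2_eq_square)
qed

lemma ipOmega_even:
  assumes "in_L2Omega w h" "in_L2Omega w (\<lambda>x y. g y)"
  shows "ipOmega w h (\<lambda>x y. g y) = wint (wminus w) (\<lambda>t. feven h t * g t)"
  unfolding ipOmega_parity(2)[OF assms] wint_def by (simp add: feven_def fodd_def)

lemma ipOmega_odd:
  assumes "in_L2Omega w h" "in_L2Omega w (\<lambda>x y. x * g y)"
  shows "ipOmega w h (\<lambda>x y. x * g y) = wint (wplus w) (\<lambda>t. fodd h t * g t)"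
  unfolding ipOmega_parity(2)[OF assms] wint_def
  by (intro set_lebesgue_integral_cong) (auto simp: feven_def fodd_def wplus_def)

end

locale moment_weight = parabola_weight +
  assumes w_moments: "\<And>k. set_integrable lborel {0..} (\<lambda>t. t ^ k * wminus w t)"
begin

lemma set_integrable_poly_wminus: "set_integrable lborel {0..} (\<lambda>t. poly R t * wminus w t)"
proof -
  have "integrable lborel (\<lambda>t. \<Sum>i\<le>degree R. coeff R i * (indicator {0..} t *\<^sub>R (t ^ i * wminus w t)))"
    by (intro Bochner_Integration.integrable_sum Bochner_Integration.integrable_mult_right)
       (use w_moments in \<open>simp add: set_integrable_def\<close>)
  moreover have "(\<lambda>t. \<Sum>i\<le>degree R. coeff R i * (indicator {0..} t *\<^sub>R (t ^ i * wminus w t)))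
      = (\<lambda>t. indicator {0..} t *\<^sub>R (poly R t * wminus w t))"
    by (auto simp: poly_altdef sum_distrib_left sum_distrib_right algebra_simps)
  ultimately show ?thesis
    unfolding set_integrable_def by simp
qed

lemma integrable_poly_parabola: "integrable lborel (\<lambda>x. poly R (x^2) * w (x^2))"
proof -
  let ?G = "\<lambda>x. \<bar>poly R (x^2)\<bar> * w (x^2)"
  have [measurable]: "?G \<in> borel_measurable borel"
    by measurable
  have "sqrt_fold ?G t = \<bar>poly R t * wminus w t\<bar>" if "t \<ge> 0" for t
    using that by (simp add: sqrt_fold_def wminus_sqrt abs_mult w_nonneg)
  then have "set_integrable lborel {0..} (sqrt_fold ?G)"
    using set_integrable_abs[OF set_integrable_poly_wminus] by (subst set_integrable_cong) auto
  then have "integrable lborel ?G"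
    using integrable_sqrt_fold_nonneg(1)[of ?G] by (simp add: w_nonneg)
  then show ?thesis
    using integrable_abs_iff[of "\<lambda>x. poly R (x^2) * w (x^2)" lborel] by (simp add: abs_mult w_nonneg)
qed

lemma in_L2Omega_even_poly: "in_L2Omega w (\<lambda>x y. poly R y)"
  using integrable_poly_parabola[of "R * R"] by (simp add: in_L2Omega_def power2_eq_square)

lemma in_L2Omega_odd_poly: "in_L2Omega w (\<lambda>x y. x * poly R y)"
proof -
  have square: "poly ([:0, 1:] * R * R) (x^2) * w (x^2) = (x * poly R (x^2))^2 * w (x^2)" for x :: real
    by (simp add: power2_eq_square)
  show ?thesis
    using integrable_poly_parabola[of "[:0, 1:] * R * R"] unfolding square in_L2Omega_def by simp
qed

lemma ocoef_Y1:
  assumes "in_L2Omega w f"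
  shows "ocoef w f (Y1 p k) = fcoef (wminus w) p (feven f) k"
proof -
  have Y1: "Y1 p k = (\<lambda>x y. poly (p k) y)"
    by (simp add: fun_eq_iff Y1_def)
  have "ipOmega w (Y1 p k) (Y1 p k) = hnorm (wminus w) p k"
    unfolding Y1 hnorm_def ipOmega_even[OF in_L2Omega_even_poly in_L2Omega_even_poly]
    by (simp add: feven_def power2_eq_square)
  then show ?thesis
    unfolding ocoef_def fcoef_def by (simp add: Y1 ipOmega_even[OF assms in_L2Omega_even_poly])
qed

lemma ocoef_Y2:
  assumes "in_L2Omega w f"
  shows "ocoef w f (Y2 q (Suc k)) = fcoef (wplus w) q (fodd f) k"
proof -
  have Y2: "Y2 q (Suc k) = (\<lambda>x y. x * poly (q k) y)"
    by (simp add: fun_eq_iff Y2_def)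
  have "ipOmega w (Y2 q (Suc k)) (Y2 q (Suc k)) = hnorm (wplus w) q k"
    unfolding Y2 hnorm_def ipOmega_odd[OF in_L2Omega_odd_poly in_L2Omega_odd_poly]
    by (rule wint_cong) (auto simp: fodd_def wplus_def power2_eq_square)
  then show ?thesis
    unfolding ocoef_def fcoef_def by (simp add: Y2 ipOmega_odd[OF assms in_L2Omega_odd_poly])
qed

lemma ocoef_one:
  assumes "in_L2Omega w f" and p: "is_OPS (wminus w) p"
  shows "ocoef w f (\<lambda>_ _. 1) = fcoef (wminus w) p (feven f) 0 * poly (p 0) y"
proof -
  from p obtain c where p0: "p 0 = [:c:]"
    using degree0_coeffs[of "p 0"] by (auto simp: is_OPS_def)
  from p have "c \<noteq> 0"
    by (auto simp: is_OPS_def hnorm_def wint_def p0 dest: spec[of _ 0])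
  have "Y1 p 0 = (\<lambda>x y. c * 1)"
    by (simp add: fun_eq_iff Y1_def p0)
  then show ?thesis
    using ocoef_Y1[OF assms(1), of p 0] ocoef_scale[OF \<open>c \<noteq> 0\<close>, of w f "\<lambda>_ _. 1"] \<open>c \<noteq> 0\<close>
    by (simp add: p0)
qed

lemma Sn_eq_spart:
  assumes "in_L2Omega w f" "is_OPS (wminus w) p" "n \<ge> 1"
  shows "Sn w p q f n x y = spart (wminus w) p (feven f) n y + x * spart (wplus w) q (fodd f) (n - 1) y"
proof -
  obtain m where n: "n = Suc m"
    using \<open>n \<ge> 1\<close> by (cases n) auto
  have "Sn w p q f n x y = ocoef w f (\<lambda>_ _. 1) +
      (\<Sum>k\<le>m. ocoef w f (Y1 p (Suc k)) * Y1 p (Suc k) x y + ocoef w f (Y2 q (Suc k)) * Y2 q (Suc k) x y)"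
    using sum.shift_bounds_cl_Suc_ivl[of _ 0 m] by (simp add: Sn_def n atMost_atLeast0)
  also have "\<dots> = spart (wminus w) p (feven f) n y + x * spart (wplus w) q (fodd f) (n - 1) y"
    unfolding spart_def n sum.atMost_Suc_shift
    by (simp add: ocoef_one[OF assms(1,2), of y] ocoef_Y1[OF assms(1)] ocoef_Y2[OF assms(1)] Y1_def Y2_def
        sum.distrib sum_distrib_left algebra_simps)
  finally show ?thesis .
qed

lemma ipOmega_residual:
  assumes f: "in_L2Omega w f" and p: "is_OPS (wminus w) p" and "n \<ge> 1"
  shows "ipOmega w (\<lambda>x y. f x y - Sn w p q f n x y) (\<lambda>x y. f x y - Sn w p q f n x y)
    = L2sq (wminus w) (\<lambda>t. spart (wminus w) p (feven f) n t - feven f t)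
    + L2sq (wplus w) (\<lambda>t. spart (wplus w) q (fodd f) (n - 1) t - fodd f t)"
proof -
  define A where "A = (\<Sum>k\<le>n. smult (fcoef (wminus w) p (feven f) k) (p k))"
  define B where "B = (\<Sum>k\<le>n - 1. smult (fcoef (wplus w) q (fodd f) k) (q k))"
  define h where "h = (\<lambda>x y. 1 * f x y + -1 * (1 * poly A y + 1 * (x * poly B y)))"
  have "in_L2Omega w h"
    unfolding h_def by (intro in_L2Omega_lincomb f in_L2Omega_even_poly in_L2Omega_odd_poly)
  have residual: "(\<lambda>x y. f x y - Sn w p q f n x y) = h"
    using Sn_eq_spart[OF f p \<open>n \<ge> 1\<close>] by (simp add: fun_eq_iff h_def A_def B_def spart_poly)
  have "L2sq (wminus w) (feven h) = L2sq (wminus w) (\<lambda>t. poly A t - feven f t)"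
    unfolding L2sq_def by (rule wint_cong) (simp add: h_def feven_def power2_commute field_simps)
  moreover have "L2sq (wplus w) (fodd h) = L2sq (wplus w) (\<lambda>t. poly B t - fodd f t)"
    unfolding L2sq_def
  proof (rule wint_cong)
    fix t :: real
    assume "t \<ge> 0"
    show "(fodd h t)^2 * wplus w t = (poly B t - fodd f t)^2 * wplus w t"
    proof (cases "t = 0")
      case False
      with \<open>t \<ge> 0\<close> have "sqrt t > 0"
        by simp
      then have "fodd h t = fodd f t - poly B t"
        by (simp add: h_def fodd_def field_simps)
      then show ?thesis
        by (simp add: power2_commute)
    qed (simp add: wplus_def)
  qed
  ultimately show ?thesis
    unfolding residual L2sq_parity[OF \<open>in_L2Omega w h\<close>] by (simp add: A_def B_def spart_poly)
qed

end

theorem theorem4p4: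
  fixes w :: "real \<Rightarrow> real" and p q :: "nat \<Rightarrow> real poly" and f :: "real \<Rightarrow> real \<Rightarrow> real"
  assumes w_meas: "w \<in> borel_measurable lborel"
    and w_nonneg: "\<And>t. t \<ge> 0 \<Longrightarrow> w t \<ge> 0"
    and w_moments: "\<And>k. set_integrable lborel {0..} (\<lambda>t. t ^ k * wminus w t)"
    and p_OPS: "is_OPS (wminus w) p"
    and q_OPS: "is_OPS (wplus w) q"
    and f_L2: "in_L2Omega w f"
  shows "(\<forall>x n. n \<ge> 1 \<longrightarrow>
            Sn w p q f n x (x^2) =
              spart (wminus w) p (feven f) n (x^2) + x * spart (wplus w) q (fodd f) (n - 1) (x^2))
       \<and> (\<forall>x. x^2 > 0 \<longrightarrow>
            (\<lambda>n. spart (wminus w) p (feven f) n (x^2)) \<longlonglongrightarrow> feven f (x^2) \<longrightarrow>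
            (\<lambda>n. spart (wplus w) q (fodd f) (n - 1) (x^2)) \<longlonglongrightarrow> fodd f (x^2) \<longrightarrow>
            (\<lambda>n. Sn w p q f n x (x^2)) \<longlonglongrightarrow> f x (x^2))
       \<and> (\<forall>n. n \<ge> 1 \<longrightarrow>
            ipOmega w (\<lambda>x y. f x y - Sn w p q f n x y) (\<lambda>x y. f x y - Sn w p q f n x y) =
              L2sq (wminus w) (\<lambda>t. spart (wminus w) p (feven f) n t - feven f t)
            + L2sq (wplus w) (\<lambda>t. spart (wplus w) q (fodd f) (n - 1) t - fodd f t))"
proof -
  interpret moment_weight w
    using w_meas w_nonneg w_moments by unfold_locales simp_all
  note Sn_eq = Sn_eq_spart[OF f_L2 p_OPS]
  have "(\<lambda>n. Sn w p q f n x (x^2)) \<longlonglongrightarrow> f x (x^2)"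
    if "x^2 > 0"
      and "(\<lambda>n. spart (wminus w) p (feven f) n (x^2)) \<longlonglongrightarrow> feven f (x^2)"
      and "(\<lambda>n. spart (wplus w) q (fodd f) (n - 1) (x^2)) \<longlonglongrightarrow> fodd f (x^2)" for x
  proof -
    have "(\<lambda>n. spart (wminus w) p (feven f) n (x^2) + x * spart (wplus w) q (fodd f) (n - 1) (x^2))
        \<longlonglongrightarrow> feven f (x^2) + x * fodd f (x^2)"
      using that by (intro tendsto_intros)
    moreover have "\<forall>\<^sub>F n in sequentially. spart (wminus w) p (feven f) n (x^2)
        + x * spart (wplus w) q (fodd f) (n - 1) (x^2) = Sn w p q f n x (x^2)"
      using eventually_ge_at_top[of 1] by eventually_elim (simp add: Sn_eq)
    ultimately show ?thesis
      using feven_fodd_recombine[of x f] \<open>x^2 > 0\<close> by (simp add: Lim_transform_eventually)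
  qed
  then show ?thesis
    using Sn_eq ipOmega_residual[OF f_L2 p_OPS] by blast
qed

end
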